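(* Let $p>3$ be a prime, $e$ a positive integer, $q=p^e$, and $k$ an integer with $1\le k\le e$. Then $D_{p^k,3}(1,x)$ is not a permutation polynomial of $\mathbb{F}_q$.
   Context: For $n\ge 1$ and $a\in\mathbb{F}_q$, $D_{n,3}(a,x)=\sum_{i=0}^{\lfloor n/2\rfloor}\frac{n-3i}{n-i}\binom{n-i}{i}(-x)^i a^{n-2i}\in\mathbb{F}_q[x]$, where each coefficient $\frac{n-3i}{n-i}\binom{n-i}{i}$ is an integer read modulo $p$; and $D_{0,3}(a,x)=-1$. A polynomial $g\in\mathbb{F}_q[x]$ is a permutation polynomial of $\mathbb{F}_q$ if $c\mapsto g(c)$ is a bijection $\mathbb{F}_q\to\mathbb{F}_q$. *)

theory Defs
  imports "HOL-Computational_Algebra.Polynomial"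
begin

text \<open>Integer coefficient (n-3i)/(n-i) * binom(n-i,i); the division is exact for
  0 <= i <= n/2, n >= 1.\<close>
definition dickson3_coeff :: "nat \<Rightarrow> nat \<Rightarrow> int" where
  "dickson3_coeff n i = ((int n - 3 * int i) * int ((n - i) choose i)) div int (n - i)"

definition D3 :: "nat \<Rightarrow> 'a::comm_ring_1 \<Rightarrow> 'a poly" where
  "D3 n a = (if n = 0 then -1 else
     (\<Sum>i\<le>n div 2. smult (of_int (dickson3_coeff n i) * a ^ (n - 2 * i)) ([:0, -1:] ^ i)))"

definition perm_poly :: "'a::{finite,field} poly \<Rightarrow> bool" where
  "perm_poly g \<longleftrightarrow> bij (\<lambda>c. poly g c)"

end

theory Submission
  imports Defs "HOL-Number_Theory.Residues"
begin

text \<open>Write \<open>D\<^sub>n\<close> for \<open>D\<^sub>n\<^sub>,\<^sub>3(1,x)\<close>. Its constant term is 1, and at \<open>x = -2\<close> it evaluates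
  to \<open>(-1)\<^sup>n\<^sup>+\<^sup>1\<close>: splitting the coefficient as
  \<open>(n-3i)/(n-i) C(n-i,i) = C(n-i,i) - 2 C(n-i-1,i-1)\<close> gives \<open>D\<^sub>n(-2) = J\<^sub>n - 4 J\<^sub>n\<^sub>-\<^sub>2\<close>
  with \<open>J\<^sub>N = \<Sum>\<^sub>i C(N-i,i) 2\<^sup>i = (2\<^sup>N\<^sup>+\<^sup>1 - (-1)\<^sup>N\<^sup>+\<^sup>1)/3\<close> (Jacobsthal numbers, shifted by one).
  Hence for odd \<open>n\<close> the points \<open>0\<close> and \<open>-2\<close> have the same image, and they are distinct
  unless the characteristic is 2. Every \<open>p\<^sup>k\<close> with \<open>p > 3\<close> prime is odd.\<close>

definition jacobsthal :: "nat \<Rightarrow> int" where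
  "jacobsthal N = (\<Sum>i\<le>N. int (N - i choose i) * 2 ^ i)"

lemma jacobsthal_Suc_Suc:
  "jacobsthal (Suc (Suc N)) = jacobsthal (Suc N) + 2 * jacobsthal N"
proof -
  have shift: "jacobsthal (Suc M) = 1 + (\<Sum>i\<le>M. int (M - i choose Suc i) * 2 ^ Suc i)" for M
    unfolding jacobsthal_def by (subst sum.atMost_Suc_shift) simp
  have "jacobsthal (Suc (Suc N)) = 1 + (\<Sum>i\<le>N. int (Suc N - i choose Suc i) * 2 ^ Suc i)"
    using shift[of "Suc N"] by simp
  also have "(\<Sum>i\<le>N. int (Suc N - i choose Suc i) * 2 ^ Suc i)
      = (\<Sum>i\<le>N. int (N - i choose Suc i) * 2 ^ Suc i) + (\<Sum>i\<le>N. int (N - i choose i) * 2 ^ Suc i)"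
    by (subst sum.distrib[symmetric], rule sum.cong) (auto simp: Suc_diff_le algebra_simps)
  also have "(\<Sum>i\<le>N. int (N - i choose i) * 2 ^ Suc i) = 2 * jacobsthal N"
    unfolding jacobsthal_def by (simp add: sum_distrib_left algebra_simps)
  finally show ?thesis
    using shift[of N] by simp
qed

lemma jacobsthal_closed_form: "3 * jacobsthal N = 2 ^ (N + 1) - (-1) ^ (N + 1)"
proof (induction N rule: nat_less_induct)
  case (1 N)
  consider "N = 0" | "N = 1" | L where "N = Suc (Suc L)"
    by (metis One_nat_def not0_implies_Suc)
  then show ?case
  proof cases
    case 3
    have "3 * jacobsthal (Suc L) = 2 ^ (L + 2) - (-1) ^ (L + 2)"
      and "3 * jacobsthal L = 2 ^ (L + 1) - (-1) ^ (L + 1)"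
      using 1 3 by auto
    moreover have "3 * jacobsthal N = 3 * jacobsthal (Suc L) + 2 * (3 * jacobsthal L)"
      using jacobsthal_Suc_Suc[of L] 3 by simp
    ultimately show ?thesis
      using 3 by (simp add: algebra_simps)
  qed (simp_all add: jacobsthal_def)
qed

lemma jacobsthal_eq_sum_atMost:
  assumes "N div 2 \<le> K"
  shows "(\<Sum>i\<le>K. int (N - i choose i) * 2 ^ i) = jacobsthal N"
proof -
  have vanish: "int (N - i choose i) * 2 ^ i = 0" if "N div 2 < i" for i
    using that by (simp add: binomial_eq_0)
  have "(\<Sum>i\<le>K. int (N - i choose i) * 2 ^ i) = (\<Sum>i\<le>N div 2. int (N - i choose i) * 2 ^ i)"
    by (rule sum.mono_neutral_right) (use assms vanish in auto)
  also have "\<dots> = jacobsthal N"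
    unfolding jacobsthal_def by (rule sum.mono_neutral_left) (use vanish in auto)
  finally show ?thesis .
qed

lemma dickson3_coeff_0: "n > 0 \<Longrightarrow> dickson3_coeff n 0 = 1"
  by (simp add: dickson3_coeff_def)

lemma dickson3_coeff_eq_binomial_diff:
  assumes "1 \<le> i" "2 * i \<le> n"
  shows "dickson3_coeff n i = int (n - i choose i) - 2 * int (n - i - 1 choose (i - 1))"
proof -
  define M where "M = n - i"
  have "M \<ge> 1" "i \<le> M"
    using assms by (auto simp: M_def)
  have "i * (M choose i) = M * (M - 1 choose (i - 1))"
    using binomial_absorption[of "i - 1" M] assms(1) by simp
  then have "int i * int (M choose i) = int M * int (M - 1 choose (i - 1))"
    by (metis of_nat_mult)
  moreover have "int n - 3 * int i = int M - 2 * int i"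
    using assms by (simp add: M_def)
  ultimately have "(int n - 3 * int i) * int (M choose i)
      = int M * (int (M choose i) - 2 * int (M - 1 choose (i - 1)))"
    by (simp add: algebra_simps)
  then show ?thesis
    using \<open>M \<ge> 1\<close> by (simp add: dickson3_coeff_def M_def)
qed

lemma dickson3_coeff_weighted_sum:
  assumes "n \<ge> 1"
  shows "(\<Sum>i\<le>n div 2. dickson3_coeff n i * 2 ^ i) = (-1) ^ (n + 1)"
proof (cases "n = 1")
  case True
  then show ?thesis by (simp add: dickson3_coeff_def)
next
  case False
  define r where "r = n - 2"
  have n: "n = r + 2"
    using assms False by (simp add: r_def)
  have "(\<Sum>i\<le>n div 2. dickson3_coeff n i * 2 ^ i)
      = (\<Sum>i\<le>n div 2. int (n - i choose i) * 2 ^ i)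
        - 2 * (\<Sum>i\<le>n div 2. (if i = 0 then 0 else int (n - i - 1 choose (i - 1))) * 2 ^ i)"
    unfolding sum_distrib_left sum_subtractf[symmetric]
  proof (rule sum.cong)
    fix i assume "i \<in> {..n div 2}"
    then have "2 * i \<le> n"
      by auto
    show "dickson3_coeff n i * 2 ^ i = int (n - i choose i) * 2 ^ i
        - 2 * ((if i = 0 then 0 else int (n - i - 1 choose (i - 1))) * 2 ^ i)"
    proof (cases "i = 0")
      case False
      then have "1 \<le> i"
        by simp
      show ?thesis
        unfolding dickson3_coeff_eq_binomial_diff[OF \<open>1 \<le> i\<close> \<open>2 * i \<le> n\<close>]
        using False by (simp add: algebra_simps)
    qed (simp add: n dickson3_coeff_0)
  qed simp
  also have "(\<Sum>i\<le>n div 2. (if i = 0 then 0 else int (n - i - 1 choose (i - 1))) * 2 ^ i)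
      = 2 * (\<Sum>j\<le>r div 2. int (r - j choose j) * 2 ^ j)"
  proof -
    have "n div 2 = Suc (r div 2)"
      using n by simp
    then show ?thesis
      by (simp only: sum.atMost_Suc_shift) (simp add: n sum_distrib_left algebra_simps)
  qed
  finally have "(\<Sum>i\<le>n div 2. dickson3_coeff n i * 2 ^ i) = jacobsthal n - 4 * jacobsthal r"
    using jacobsthal_eq_sum_atMost[of n "n div 2"] jacobsthal_eq_sum_atMost[of r "r div 2"] by simp
  then show ?thesis
    using jacobsthal_closed_form[of n] jacobsthal_closed_form[of r] by (simp add: n algebra_simps)
qed

lemma poly_D3_one:
  "n > 0 \<Longrightarrow> poly (D3 n (1::'a::comm_ring_1)) c = (\<Sum>i\<le>n div 2. of_int (dickson3_coeff n i) * (- c) ^ i)"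
  by (simp add: D3_def poly_sum)

lemma poly_D3_one_at_0:
  assumes "n > 0"
  shows "poly (D3 n (1::'a::comm_ring_1)) 0 = 1"
proof -
  have "poly (D3 n (1::'a)) 0 = (\<Sum>i\<le>n div 2. of_int (dickson3_coeff n i) * (0::'a) ^ i)"
    unfolding poly_D3_one[OF assms] by simp
  also have "\<dots> = of_int (dickson3_coeff n 0)"
    by (subst sum.atMost_shift) simp
  finally show ?thesis
    using assms by (simp add: dickson3_coeff_0)
qed

lemma poly_D3_one_at_minus_2:
  assumes "n > 0"
  shows "poly (D3 n (1::'a::comm_ring_1)) (-2) = (-1) ^ (n + 1)"
proof -
  have "poly (D3 n (1::'a)) (-2) = of_int (\<Sum>i\<le>n div 2. dickson3_coeff n i * 2 ^ i)"
    unfolding poly_D3_one[OF assms] by simp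
  then show ?thesis
    using dickson3_coeff_weighted_sum assms by simp
qed

lemma not_perm_poly_D3_one_odd:
  assumes "odd n" and "CHAR('a) \<noteq> 2"
  shows "\<not> perm_poly (D3 n (1::'a::{finite,field}))"
proof
  assume "perm_poly (D3 n (1::'a))"
  then have "inj (poly (D3 n (1::'a)))"
    by (simp add: perm_poly_def bij_def)
  moreover have "poly (D3 n (1::'a)) (-2) = poly (D3 n 1) 0"
    using assms(1) by (simp add: poly_D3_one_at_0 poly_D3_one_at_minus_2 odd_pos)
  ultimately have "of_nat 2 = (0::'a)"
    by (simp add: inj_eq)
  then have "CHAR('a) dvd 2"
    by (simp only: of_nat_eq_0_iff_char_dvd)
  moreover have "prime CHAR('a)"
    by (simp add: prime_CHAR_semidom finite_imp_CHAR_pos)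
  ultimately show False
    using assms(2) primes_dvd_imp_eq two_is_prime_nat by blast
qed

lemma CHAR_eq_prime_if_card_eq_power:
  assumes "prime p" and "card (UNIV::'a::{finite,field} set) = p ^ e"
  shows "CHAR('a) = p"
proof -
  have "prime CHAR('a)"
    by (simp add: prime_CHAR_semidom finite_imp_CHAR_pos)
  moreover have "CHAR('a) dvd p ^ e"
    using CHAR_dvd_CARD[where 'a='a] assms(2) by simp
  ultimately show ?thesis
    using assms(1) by (metis prime_dvd_power primes_dvd_imp_eq)
qed

theorem corollary2p8:
  fixes p e k :: nat
  assumes "prime p" and "p > 3" and "e > 0"
    and "1 \<le> k" and "k \<le> e"
    and "card (UNIV::'a set) = p ^ e"
  shows "\<not> perm_poly (D3 (p ^ k) (1::'a::{finite,field}))"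
proof (rule not_perm_poly_D3_one_odd)
  show "odd (p ^ k)"
    using assms(1,2) prime_odd_nat by auto
  show "CHAR('a) \<noteq> 2"
    using CHAR_eq_prime_if_card_eq_power[OF assms(1,6)] assms(2) by simp
qed

end
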